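(* Let $G$ be a multigraph in which each edge $\{u,v\}$ appears at most twice in $E(G)$, and let $\mathsf{VC}$ be a vertex cover of $G$. Assume every vertex of $G$ has even degree. Then there exists a multiset $\mathcal{C}$ of cycles in $G$ such that: (1) at most $2|\mathsf{VC}|^2$ cycles in $\mathcal{C}$ have length other than $4$; (2) the cycles in $\mathcal{C}$ of length other than $4$ are simple; (3) the multiset sum $\biguplus_{C\in\mathcal{C}}E(C)$ equals $E(G)$ as multisets.
   Context: A path in a multigraph is a sequence $(v_0,\dots,v_\ell)$ of vertices with $\{v_i,v_{i+1}\}$ an edge for all $0\le i<\ell$ (vertices and edges may repeat); its length is $\ell$. A cycle is a path with $v_0=v_\ell$; it is simple if $v_0,\dots,v_{\ell-1}$ are pairwise distinct. For a cycle $C=(v_0,\dots,v_\ell)$, $E(C)$ is the multiset $\{\{v_i,v_{i+1}\}:0\le i<\ell\}$ (with repetition). Degrees count edges with multiplicity. *)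

theory Defs
  imports Main "HOL-Library.Multiset"
begin

definition multigraph :: "'a set \<Rightarrow> 'a set multiset \<Rightarrow> bool" where
  "multigraph V E \<longleftrightarrow> finite V \<and> (\<forall>e\<in>#E. e \<subseteq> V \<and> card e = 2)"

definition degree :: "'a set multiset \<Rightarrow> 'a \<Rightarrow> nat" where
  "degree E v = size (filter_mset (\<lambda>e. v \<in> e) E)"

definition vertex_cover :: "'a set \<Rightarrow> 'a set multiset \<Rightarrow> 'a set \<Rightarrow> bool" where
  "vertex_cover V E VC \<longleftrightarrow> VC \<subseteq> V \<and> (\<forall>e\<in>#E. e \<inter> VC \<noteq> {})"

definition is_path :: "'a set \<Rightarrow> 'a set multiset \<Rightarrow> 'a list \<Rightarrow> bool" where
  "is_path V E p \<longleftrightarrow> p \<noteq> [] \<and> set p \<subseteq> V \<and>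
     (\<forall>i. i + 1 < length p \<longrightarrow> {p ! i, p ! (i + 1)} \<in># E)"

definition path_len :: "'a list \<Rightarrow> nat" where
  "path_len p = length p - 1"

definition is_cycle :: "'a set \<Rightarrow> 'a set multiset \<Rightarrow> 'a list \<Rightarrow> bool" where
  "is_cycle V E c \<longleftrightarrow> is_path V E c \<and> hd c = last c"

definition simple_cycle :: "'a list \<Rightarrow> bool" where
  "simple_cycle c \<longleftrightarrow> distinct (butlast c)"

definition cycle_edges :: "'a list \<Rightarrow> 'a set multiset" where
  "cycle_edges c = mset (map (\<lambda>i. {c ! i, c ! (i + 1)}) [0..<path_len c])"

end

theory Submission
  imports Defs
begin

text \<open>While more than 4|VC|^2 edges remain we peel off a 4-cycle. At most |VC|^2 edges lie
inside VC, since each pair of cover vertices carries at most two parallel edges. Every other edge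
joins VC to an outside vertex, whose degree is even, so these edges pair up into more than
|VC|^2 cherries a-w-b with leaves a, b \<in> VC; two cherries with the same leaves form the
4-cycle a w b w' a. Removing a closed walk keeps all degrees even, and once at most 4|VC|^2
edges are left, any decomposition into simple cycles, each of length at least 2, has at most
2|VC|^2 members.\<close>

lemma add_mset_subset_eq_if_not_in:
  "a \<notin># A \<Longrightarrow> A \<subseteq># B \<Longrightarrow> a \<in># B \<Longrightarrow> add_mset a A \<subseteq># B"
  by (metis diff_single_trivial insert_DiffM2 insert_subset_eq_iff subset_eq_diff_conv)

lemma card_2_elim:
  assumes "card e = 2" "u \<in> e"
  obtains x where "e = {u, x}" "x \<noteq> u"
  using assms by (metis card_2_iff insert_commute insert_iff singletonD)

lemma multigraph_mono: "multigraph V E \<Longrightarrow> E' \<subseteq># E \<Longrightarrow> multigraph V E'"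
  unfolding multigraph_def by (meson mset_subset_eqD)

lemma vertex_cover_mono: "vertex_cover V E X \<Longrightarrow> E' \<subseteq># E \<Longrightarrow> vertex_cover V E' X"
  unfolding vertex_cover_def by (meson mset_subset_eqD)

fun walk_edges :: "'a list \<Rightarrow> 'a set multiset" where
  "walk_edges (x # y # r) = add_mset {x, y} (walk_edges (y # r))"
| "walk_edges _ = {#}"

lemma cycle_edges_eq_walk_edges: "cycle_edges p = walk_edges p"
proof (induction p rule: walk_edges.induct)
  case (1 x y r)
  have "[0..<path_len (x # y # r)] = 0 # map Suc [0..<path_len (y # r)]"
    by (simp add: path_len_def upt_conv_Cons map_Suc_upt del: upt_Suc)
  then show ?case using 1 by (simp add: cycle_edges_def comp_def)
qed (auto simp: cycle_edges_def path_len_def)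

lemma size_walk_edges: "size (walk_edges p) = path_len p"
  by (induction p rule: walk_edges.induct) (auto simp: path_len_def)

lemma walk_edges_subset_set: "e \<in># walk_edges p \<Longrightarrow> e \<subseteq> set p"
  by (induction p rule: walk_edges.induct) auto

lemma walk_edges_append_mono: "walk_edges xs \<subseteq># walk_edges (xs @ ys)"
  by (induction xs rule: walk_edges.induct) (auto simp: Cons_eq_append_conv)

definition closed_walk :: "'a set \<Rightarrow> 'a set multiset \<Rightarrow> 'a list \<Rightarrow> bool" where
  "closed_walk V E c \<longleftrightarrow> c \<noteq> [] \<and> hd c = last c \<and> set c \<subseteq> V \<and> walk_edges c \<subseteq># E"

lemma closed_walk_mono: "closed_walk V E c \<Longrightarrow> E \<subseteq># E' \<Longrightarrow> closed_walk V E' c"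
  unfolding closed_walk_def by (meson subset_mset.order_trans)

lemma is_cycle_if_closed_walk:
  assumes "closed_walk V E c"
  shows "is_cycle V E c"
proof -
  have "{c ! i, c ! (i + 1)} \<in># E" if "i + 1 < length c" for i
  proof -
    have "{c ! i, c ! (i + 1)} \<in># cycle_edges c"
      using that by (auto simp: cycle_edges_def path_len_def)
    then show ?thesis
      using assms by (auto simp: closed_walk_def cycle_edges_eq_walk_edges dest: mset_subset_eqD)
  qed
  then show ?thesis using assms by (auto simp: closed_walk_def is_cycle_def is_path_def)
qed

lemma set_subset_Union_walk_edges: "2 \<le> length p \<Longrightarrow> set p \<subseteq> \<Union> (set_mset (walk_edges p))"
proof (induction p rule: walk_edges.induct)
  case (1 x y r)
  then show ?case by (cases r) auto
qed auto

lemma set_subset_if_walk_edges_subset: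
  assumes "multigraph V E" "walk_edges p \<subseteq># E" "2 \<le> length p"
  shows "set p \<subseteq> V"
proof -
  have "\<Union> (set_mset (walk_edges p)) \<subseteq> V"
    using assms(1,2) unfolding multigraph_def by (meson Union_least mset_subset_eqD)
  then show ?thesis using set_subset_Union_walk_edges[OF assms(3)] by blast
qed

lemma degree_add_mset:
  "degree (add_mset e E) v = (if v \<in> e then Suc (degree E v) else degree E v)"
  by (simp add: degree_def)

lemma degree_union: "degree (E + F) v = degree E v + degree F v"
  by (simp add: degree_def)

lemma degree_diff: "F \<subseteq># E \<Longrightarrow> degree (E - F) v = degree E v - degree F v"
  by (simp add: degree_def size_Diff_submset multiset_filter_mono)

lemma degree_pos_iff: "0 < degree E v \<longleftrightarrow> (\<exists>e\<in>#E. v \<in> e)"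
  unfolding degree_def by (metis filter_mset_eq_mempty_iff nonempty_has_size)

lemma even_degree_diff:
  "F \<subseteq># E \<Longrightarrow> even (degree E v) \<Longrightarrow> even (degree F v) \<Longrightarrow> even (degree (E - F) v)"
  by (simp add: degree_diff)

lemma another_edge_at_even_vertex:
  assumes "e \<in># E" "v \<in> e" "even (degree E v)"
  shows "\<exists>e'\<in># E - {#e#}. v \<in> e'"
proof -
  have "0 < degree E v" using assms(1,2) by (metis degree_pos_iff)
  moreover have "degree (E - {#e#}) v = degree E v - 1"
    using assms(1,2) degree_diff[of "{#e#}" E v] by (simp add: degree_def)
  ultimately have "odd (degree (E - {#e#}) v)" using assms(3) by simp
  then have "0 < degree (E - {#e#}) v" by (rule odd_pos)
  then show ?thesis by (metis degree_pos_iff)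
qed

lemma even_degree_walk_edges:
  assumes "p \<noteq> []" "\<forall>e\<in>#walk_edges p. card e = 2"
  shows "even (degree (walk_edges p) v + of_bool (hd p = v) + of_bool (last p = v))"
  using assms
proof (induction p rule: walk_edges.induct)
  case (1 x y r)
  then have "x \<noteq> y" by auto
  with 1 show ?case by (auto simp: degree_add_mset)
qed (auto simp: degree_def)

lemma even_degree_diff_closed_walk:
  assumes "multigraph V E" "closed_walk V E c" "even (degree E v)"
  shows "even (degree (E - walk_edges c) v)"
proof -
  have "\<forall>e\<in>#walk_edges c. card e = 2"
    using assms(1,2) unfolding multigraph_def closed_walk_def by (meson mset_subset_eqD)
  then have "even (degree (walk_edges c) v)"
    using even_degree_walk_edges[of c v] assms(2) by (auto simp: closed_walk_def)
  then show ?thesis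
    using even_degree_diff assms(2,3) by (auto simp: closed_walk_def)
qed

section \<open>Decomposition into simple cycles\<close>

lemma walk_edges_at_start:
  assumes "distinct (u # v # w)" "e \<in># walk_edges (u # v # w)" "u \<in> e"
  shows "e = {u, v}"
  using assms walk_edges_subset_set[of e "v # w"] by auto

lemma closing_simple_cycle:
  assumes "distinct (u # v # w @ [x])" "walk_edges (u # v # w @ [x]) \<subseteq># E" "{x, u} \<in># E"
    and "set (u # v # w @ [x]) \<subseteq> V"
  defines "c \<equiv> x # u # v # w @ [x]"
  shows "closed_walk V E c \<and> simple_cycle c \<and> 2 \<le> path_len c"
proof -
  have "{x, u} \<notin># walk_edges (u # v # w @ [x])"
    using walk_edges_at_start[OF assms(1), of "{x, u}"] assms(1) by (auto simp: doubleton_eq_iff)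
  then have "walk_edges c \<subseteq># E"
    using add_mset_subset_eq_if_not_in[OF _ assms(2,3)] by (simp add: c_def)
  moreover have "distinct (butlast c)" using assms(1) by (auto simp: c_def butlast_append)
  ultimately show ?thesis using assms(4)
    by (auto simp: c_def closed_walk_def simple_cycle_def path_len_def)
qed

text \<open>The even degree at the first vertex u of a simple path yields a second edge ux; it either
closes a simple cycle or extends the path, and a simple path has at most card V vertices.\<close>

lemma simple_cycle_from_path:
  assumes "multigraph V E" "\<forall>v. even (degree E v)"
  shows "distinct p \<Longrightarrow> walk_edges p \<subseteq># E \<Longrightarrow> set p \<subseteq> V \<Longrightarrow> 2 \<le> length p \<Longrightarrow>
    \<exists>c. closed_walk V E c \<and> simple_cycle c \<and> 2 \<le> path_len c"
proof (induction "card V - length p" arbitrary: p rule: less_induct)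
  case less
  obtain u v r where p: "p = u # v # r"
    using less.prems(4) by (metis Suc_le_length_iff numeral_2_eq_2)
  have uv: "{u, v} \<in># E" using less.prems(2) p by (simp add: insert_subset_eq_iff)
  obtain e' where e': "e' \<in># E - {#{u, v}#}" "u \<in> e'"
    using another_edge_at_even_vertex[OF uv _ ] assms(2) by blast
  have "card e' = 2" using e'(1) assms(1) unfolding multigraph_def by (meson in_diffD)
  then obtain x where x: "e' = {u, x}" "x \<noteq> u" using e'(2) by (rule card_2_elim)
  have xV: "x \<in> V"
    using e'(1) x(1) assms(1) unfolding multigraph_def by (meson in_diffD insert_subset)
  have xu: "{x, u} \<in># E" using e'(1) x(1) by (metis in_diffD insert_commute)
  consider "x = v" | "x \<notin> set p" | r1 r2 where "r = r1 @ x # r2"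
    using p x(2) by (metis set_ConsD split_list)
  then show ?case
  proof cases
    case 1
    have "walk_edges [u, v, u] \<subseteq># E"
      using e' x 1 uv by (simp add: insert_commute insert_subset_eq_iff)
    then show ?thesis using less.prems(1,3) p x(2) 1
      by (intro exI[of _ "[u, v, u]"]) (simp add: closed_walk_def simple_cycle_def path_len_def)
  next
    case 2
    have "{x, u} \<notin># walk_edges p" using 2 walk_edges_subset_set by blast
    then have "walk_edges (x # p) \<subseteq># E"
      using add_mset_subset_eq_if_not_in[OF _ less.prems(2) xu] p by simp
    moreover have "length (x # p) \<le> card V"
      using less.prems(1,3) 2 xV assms(1) unfolding multigraph_def
      by (metis card_mono distinct.simps(2) distinct_card insert_subset list.simps(15))
    ultimately show ?thesis
      using less.hyps[of "x # p"] less.prems 2 xV by simp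
  next
    case 3
    have p_split: "p = (u # v # r1 @ [x]) @ r2" using p 3 by simp
    have "walk_edges (u # v # r1 @ [x]) \<subseteq># E"
      using less.prems(2) walk_edges_append_mono subset_mset.order_trans unfolding p_split by blast
    then show ?thesis
      using closing_simple_cycle[OF _ _ xu] less.prems(1,3) unfolding p_split by auto
  qed
qed

definition closed_walk_decomposition ::
    "'a set \<Rightarrow> 'a set multiset \<Rightarrow> 'a list multiset \<Rightarrow> bool" where
  "closed_walk_decomposition V E \<C> \<longleftrightarrow>
     (\<forall>C\<in>#\<C>. closed_walk V E C) \<and> (\<Sum>C\<in>#\<C>. walk_edges C) = E"

lemma closed_walk_decomposition_add:
  assumes "closed_walk V E c" "closed_walk_decomposition V (E - walk_edges c) \<C>"
  shows "closed_walk_decomposition V E (add_mset c \<C>)"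
  using assms closed_walk_mono[of V "E - walk_edges c" _ E]
  by (auto simp: closed_walk_decomposition_def closed_walk_def subset_mset.add_diff_inverse)

lemma size_walk_edges_diff_less:
  "closed_walk V E c \<Longrightarrow> 0 < path_len c \<Longrightarrow> size (E - walk_edges c) < size E"
  unfolding closed_walk_def
  using size_Diff_submset[of "walk_edges c" E] size_mset_mono[of "walk_edges c" E]
  by (simp add: size_walk_edges)

lemma size_closed_walk_decomposition:
  assumes "closed_walk_decomposition V E \<C>" "\<forall>C\<in>#\<C>. n \<le> path_len C"
  shows "n * size \<C> \<le> size E"
proof -
  have "n * size \<C> = (\<Sum>C\<in>#\<C>. n)" by simp
  also have "\<dots> \<le> (\<Sum>C\<in>#\<C>. path_len C)" using assms(2) by (intro sum_mset_mono) simp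
  also have "\<dots> = size (\<Sum>C\<in>#\<C>. walk_edges C)"
    by (induction \<C>) (simp_all add: size_walk_edges)
  also have "\<dots> = size E" using assms(1) by (simp add: closed_walk_decomposition_def)
  finally show ?thesis .
qed

lemma simple_cycle_decomposition:
  assumes "multigraph V E" "\<forall>v. even (degree E v)"
  shows "\<exists>\<C>. closed_walk_decomposition V E \<C> \<and>
    (\<forall>C\<in>#\<C>. simple_cycle C \<and> 2 \<le> path_len C)"
  using assms
proof (induction "size E" arbitrary: E rule: less_induct)
  case less
  show ?case
  proof (cases "E = {#}")
    case True
    then show ?thesis by (intro exI[of _ "{#}"]) (simp add: closed_walk_decomposition_def)
  next
    case False
    then obtain e where e: "e \<in># E" by blast
    then have "card e = 2" "e \<subseteq> V" using less.prems(1) by (simp_all add: multigraph_def)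
    then obtain a b where ab: "e = {a, b}" "a \<noteq> b" by (meson card_2_iff)
    have "distinct [a, b]" "walk_edges [a, b] \<subseteq># E" "set [a, b] \<subseteq> V" "2 \<le> length [a, b]"
      using ab e \<open>e \<subseteq> V\<close> by simp_all
    then obtain c where c: "closed_walk V E c" "simple_cycle c" "2 \<le> path_len c"
      using simple_cycle_from_path[OF less.prems] by blast
    have "\<exists>\<C>. closed_walk_decomposition V (E - walk_edges c) \<C> \<and>
        (\<forall>C\<in>#\<C>. simple_cycle C \<and> 2 \<le> path_len C)"
    proof (rule less.hyps)
      show "size (E - walk_edges c) < size E" using c by (simp add: size_walk_edges_diff_less)
      show "multigraph V (E - walk_edges c)" using less.prems(1) by (rule multigraph_mono) simp
      show "\<forall>v. even (degree (E - walk_edges c) v)"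
        using less.prems c(1) by (simp add: even_degree_diff_closed_walk)
    qed
    then obtain \<C> where "closed_walk_decomposition V (E - walk_edges c) \<C>"
      "\<forall>C\<in>#\<C>. simple_cycle C \<and> 2 \<le> path_len C" by blast
    then show ?thesis using c closed_walk_decomposition_add[OF c(1)]
      by (intro exI[of _ "add_mset c \<C>"]) simp
  qed
qed

section \<open>Cherries and 4-cycles\<close>

definition cherry :: "'a \<times> 'a \<times> 'a \<Rightarrow> 'a set multiset" where
  "cherry q = (case q of (w, a, b) \<Rightarrow> {#{w, a}, {w, b}#})"

lemma cherry_eq_if_leaves_eq:
  "{#a, b#} = {#a', b'#} \<Longrightarrow> cherry (w, a, b) = cherry (w, a', b')"
  by (auto simp: add_eq_conv_ex cherry_def add_mset_commute)

lemma walk_edges_eq_cherries: "walk_edges [a, w, b, w', a] = cherry (w, a, b) + cherry (w', a, b)"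
  by (simp add: cherry_def insert_commute add_mset_commute)

lemma cherry_decomposition:
  assumes "\<forall>e\<in>#B. \<exists>w x. e = {w, x} \<and> w \<notin> X \<and> x \<in> X"
    and "\<forall>w. w \<notin> X \<longrightarrow> even (degree B w)"
  shows "\<exists>Q. set_mset Q \<subseteq> (- X) \<times> X \<times> X \<and> (\<Sum>q\<in>#Q. cherry q) = B"
  using assms
proof (induction "size B" arbitrary: B rule: less_induct)
  case less
  show ?case
  proof (cases "B = {#}")
    case True
    then show ?thesis by (intro exI[of _ "{#}"]) simp
  next
    case False
    then obtain e where e: "e \<in># B" by blast
    then obtain w x where wx: "e = {w, x}" "w \<notin> X" "x \<in> X" using less.prems(1) by blast
    obtain e' where e': "e' \<in># B - {#e#}" "w \<in> e'"
      using another_edge_at_even_vertex[OF e] wx less.prems(2) by blast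
    then obtain y where y: "e' = {w, y}" "y \<in> X"
      using less.prems(1) wx(2) by (metis in_diffD insertE singletonD)
    have sub: "{#e, e'#} \<subseteq># B" using e e' by (simp add: insert_subset_eq_iff)
    have "\<exists>Q. set_mset Q \<subseteq> (- X) \<times> X \<times> X \<and> (\<Sum>q\<in>#Q. cherry q) = B - {#e, e'#}"
    proof (rule less.hyps)
      show "size (B - {#e, e'#}) < size B"
        using sub size_Diff_submset[OF sub] size_mset_mono[OF sub] by simp
      show "\<forall>e\<in>#B - {#e, e'#}. \<exists>w x. e = {w, x} \<and> w \<notin> X \<and> x \<in> X"
        using less.prems(1) by (meson in_diffD)
      show "\<forall>u. u \<notin> X \<longrightarrow> even (degree (B - {#e, e'#}) u)"
      proof (intro allI impI)
        fix u assume "u \<notin> X"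
        then have "even (degree {#e, e'#} u)" using wx y by (auto simp: degree_add_mset degree_def)
        then show "even (degree (B - {#e, e'#}) u)"
          using even_degree_diff[OF sub] less.prems(2) \<open>u \<notin> X\<close> by blast
      qed
    qed
    then obtain Q where
      Q: "set_mset Q \<subseteq> (- X) \<times> X \<times> X" "(\<Sum>q\<in>#Q. cherry q) = B - {#e, e'#}"
      by blast
    have "(\<Sum>q\<in>#add_mset (w, x, y) Q. cherry q) = {#e, e'#} + (B - {#e, e'#})"
      using Q(2) wx y by (simp add: cherry_def)
    also have "\<dots> = B" using sub by (rule subset_mset.add_diff_inverse)
    finally show ?thesis using Q(1) wx y by (intro exI[of _ "add_mset (w, x, y) Q"]) simp
  qed
qed

lemma size_le_card_if_count_le:
  assumes "finite S" "set_mset M \<subseteq> S" "\<forall>x. count M x \<le> n"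
  shows "size M \<le> n * card S"
proof -
  have "size M = (\<Sum>x\<in>set_mset M. count M x)" by (rule size_multiset_overloaded_eq)
  also have "\<dots> \<le> n * card (set_mset M)"
    using assms(3) sum_bounded_above[of "set_mset M" "count M" n] by (simp add: mult.commute)
  also have "\<dots> \<le> n * card S" using assms(1,2) by (simp add: card_mono)
  finally show ?thesis .
qed

lemma pigeonhole_mset:
  assumes "finite S" "f ` set_mset M \<subseteq> S" "card S < size M"
  shows "\<exists>x y. {#x, y#} \<subseteq># M \<and> f x = f y"
proof (rule ccontr)
  assume no_pair: "\<not> ?thesis"
  have "count M x \<le> 1" for x
  proof (rule ccontr)
    assume "\<not> count M x \<le> 1"
    then have "{#x, x#} \<subseteq># M" by (simp add: subseteq_mset_def)
    with no_pair show False by blast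
  qed
  then have "size M \<le> card (set_mset M)"
    using size_le_card_if_count_le[of "set_mset M" M 1] by simp
  also have "card (set_mset M) = card (f ` set_mset M)"
  proof (rule card_image[symmetric], rule inj_onI)
    fix x y assume "x \<in># M" "y \<in># M" "f x = f y"
    show "x = y"
    proof (rule ccontr)
      assume "x \<noteq> y"
      then have "{#x, y#} \<subseteq># M"
        using \<open>x \<in># M\<close> \<open>y \<in># M\<close> by (simp add: insert_subset_eq_iff in_diff_count)
      with no_pair \<open>f x = f y\<close> show False by blast
    qed
  qed
  also have "\<dots> \<le> card S" using assms(1,2) by (rule card_mono)
  finally show False using assms(3) by simp
qed

lemma size_edges_within_le:
  assumes "multigraph V E" "\<forall>e. count E e \<le> 2" "finite X"
  shows "size (filter_mset (\<lambda>e. e \<subseteq> X) E) \<le> (card X)^2"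
proof -
  have "size (filter_mset (\<lambda>e. e \<subseteq> X) E) \<le> 2 * card {e. e \<subseteq> X \<and> card e = 2}"
  proof (rule size_le_card_if_count_le)
    show "finite {e. e \<subseteq> X \<and> card e = 2}" using assms(3) by simp
    show "set_mset (filter_mset (\<lambda>e. e \<subseteq> X) E) \<subseteq> {e. e \<subseteq> X \<and> card e = 2}"
      using assms(1) by (auto simp: multigraph_def)
    show "\<forall>e. count (filter_mset (\<lambda>e. e \<subseteq> X) E) e \<le> 2"
      using assms(2) by (simp add: count_filter_mset)
  qed
  also have "\<dots> = 2 * (card X choose 2)" using n_subsets[OF assms(3), of 2] by simp
  also have "\<dots> \<le> card X * (card X - 1)" by (simp add: choose_two times_div_less_eq_dividend)
  also have "\<dots> \<le> (card X)^2" by (simp add: power2_eq_square)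
  finally show ?thesis .
qed

lemma four_cycle_from_cherries:
  assumes "multigraph V E" "(\<Sum>q\<in>#Q. cherry q) \<subseteq># E" "set_mset Q \<subseteq> UNIV \<times> X \<times> X"
    and "finite X" "(card X)^2 < size Q"
  shows "\<exists>c. closed_walk V E c \<and> path_len c = 4"
proof -
  define leaves :: "'a \<times> 'a \<times> 'a \<Rightarrow> 'a multiset" where "leaves = (\<lambda>(w, a, b). {#a, b#})"
  have "leaves ` set_mset Q \<subseteq> (\<lambda>(a, b). {#a, b#}) ` (X \<times> X)"
    using assms(3) by (force simp: leaves_def)
  moreover have "card ((\<lambda>(a, b). {#a, b#}) ` (X \<times> X)) \<le> (card X)^2"
    using card_image_le[of "X \<times> X" "\<lambda>(a, b). {#a, b#}"] assms(4)
    by (simp add: card_cartesian_product power2_eq_square)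
  ultimately obtain q q' where qq': "{#q, q'#} \<subseteq># Q" "leaves q = leaves q'"
    using pigeonhole_mset[of "(\<lambda>(a, b). {#a, b#}) ` (X \<times> X)" leaves Q] assms(4,5) by auto
  obtain w a b w' a' b' where q: "q = (w, a, b)" and q': "q' = (w', a', b')"
    by (metis prod_cases3)
  have "cherry q' = cherry (w', a, b)"
    using qq'(2) q q' cherry_eq_if_leaves_eq[of a' b' a b w'] by (simp add: leaves_def)
  then have "walk_edges [a, w, b, w', a] = (\<Sum>q\<in>#{#q, q'#}. cherry q)"
    unfolding walk_edges_eq_cherries by (simp add: q)
  also have "\<dots> \<subseteq># E"
    using sum_mset_image_mset_mono_strong[OF qq'(1), of cherry cherry] assms(2) by auto
  finally have "walk_edges [a, w, b, w', a] \<subseteq># E" .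
  moreover have "set [a, w, b, w', a] \<subseteq> V"
    using set_subset_if_walk_edges_subset[OF assms(1) calculation] by simp
  ultimately show ?thesis
    by (intro exI[of _ "[a, w, b, w', a]"]) (simp add: closed_walk_def path_len_def)
qed

lemma crossing_edge_ends:
  assumes "card e = 2" "e \<inter> X \<noteq> {}" "\<not> e \<subseteq> X"
  shows "\<exists>w x. e = {w, x} \<and> w \<notin> X \<and> x \<in> X"
proof -
  obtain a b where "e = {a, b}" using assms(1) by (meson card_2_iff)
  then show ?thesis using assms(2,3) by (cases "a \<in> X") (auto simp: insert_commute)
qed

lemma four_cycle_exists:
  assumes "multigraph V E" "\<forall>e. count E e \<le> 2" "vertex_cover V E X" "\<forall>v. even (degree E v)"
    and "4 * (card X)^2 < size E"
  shows "\<exists>c. closed_walk V E c \<and> path_len c = 4"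
proof -
  have "finite X"
    using assms(1,3) unfolding multigraph_def vertex_cover_def by (meson finite_subset)
  define A where "A = filter_mset (\<lambda>e. e \<subseteq> X) E"
  define B where "B = filter_mset (\<lambda>e. \<not> e \<subseteq> X) E"
  have E_split: "E = A + B" unfolding A_def B_def by (rule multiset_partition)
  have "size A \<le> (card X)^2"
    unfolding A_def using assms(1,2) \<open>finite X\<close> by (rule size_edges_within_le)
  then have size_B: "3 * (card X)^2 < size B" using assms(5) E_split by simp
  have "\<forall>e\<in>#B. \<exists>w x. e = {w, x} \<and> w \<notin> X \<and> x \<in> X"
  proof
    fix e assume "e \<in># B"
    then have "e \<in># E" "\<not> e \<subseteq> X" by (simp_all add: B_def)
    moreover have "card e = 2" "e \<inter> X \<noteq> {}"
      using assms(1,3) \<open>e \<in># E\<close> by (simp_all add: multigraph_def vertex_cover_def)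
    ultimately show "\<exists>w x. e = {w, x} \<and> w \<notin> X \<and> x \<in> X"
      using crossing_edge_ends by blast
  qed
  moreover have "\<forall>w. w \<notin> X \<longrightarrow> even (degree B w)"
  proof (intro allI impI)
    fix w assume "w \<notin> X"
    then have "degree A w = 0" unfolding A_def degree_def by (auto simp: filter_filter_mset)
    then have "degree B w = degree E w"
      using degree_union[of A B w] by (simp add: E_split[symmetric])
    then show "even (degree B w)" using assms(4) by simp
  qed
  ultimately have "\<exists>Q. set_mset Q \<subseteq> (- X) \<times> X \<times> X \<and> (\<Sum>q\<in>#Q. cherry q) = B"
    by (rule cherry_decomposition)
  then obtain Q where Q: "set_mset Q \<subseteq> (- X) \<times> X \<times> X" "(\<Sum>q\<in>#Q. cherry q) = B"
    by blast
  have "size (\<Sum>q\<in>#Q. cherry q) = 2 * size Q"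
    by (induction Q) (simp_all add: cherry_def split: prod.split)
  then have "(card X)^2 < size Q" using size_B Q(2) by simp
  moreover have "(\<Sum>q\<in>#Q. cherry q) \<subseteq># E" using Q(2) by (simp add: B_def)
  moreover have "set_mset Q \<subseteq> UNIV \<times> X \<times> X" using Q(1) by blast
  ultimately show ?thesis using four_cycle_from_cherries[OF assms(1) _ _ \<open>finite X\<close>] by simp
qed

lemma decomposition_few_long_cycles:
  assumes "multigraph V E" "\<forall>e. count E e \<le> 2" "vertex_cover V E X" "\<forall>v. even (degree E v)"
  shows "\<exists>\<C>. closed_walk_decomposition V E \<C> \<and>
    (\<forall>C\<in>#\<C>. path_len C \<noteq> 4 \<longrightarrow> simple_cycle C) \<and>
    size (filter_mset (\<lambda>C. path_len C \<noteq> 4) \<C>) \<le> 2 * (card X)^2"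
  using assms
proof (induction "size E" arbitrary: E rule: less_induct)
  case less
  show ?case
  proof (cases "size E \<le> 4 * (card X)^2")
    case True
    obtain \<C> where
      \<C>: "closed_walk_decomposition V E \<C>" "\<forall>C\<in>#\<C>. simple_cycle C \<and> 2 \<le> path_len C"
      using simple_cycle_decomposition less.prems(1,4) by blast
    have "2 * size \<C> \<le> size E" using size_closed_walk_decomposition[OF \<C>(1)] \<C>(2) by blast
    then have "size (filter_mset (\<lambda>C. path_len C \<noteq> 4) \<C>) \<le> 2 * (card X)^2"
      using True size_filter_mset_lesseq[of "\<lambda>C. path_len C \<noteq> 4" \<C>] by linarith
    then show ?thesis using \<C> by blast
  next
    case False
    then obtain c where c: "closed_walk V E c" "path_len c = 4"
      using four_cycle_exists[OF less.prems] by auto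
    have sub: "E - walk_edges c \<subseteq># E" by simp
    have "\<exists>\<C>. closed_walk_decomposition V (E - walk_edges c) \<C> \<and>
        (\<forall>C\<in>#\<C>. path_len C \<noteq> 4 \<longrightarrow> simple_cycle C) \<and>
        size (filter_mset (\<lambda>C. path_len C \<noteq> 4) \<C>) \<le> 2 * (card X)^2"
    proof (rule less.hyps)
      show "size (E - walk_edges c) < size E" using c by (simp add: size_walk_edges_diff_less)
      show "multigraph V (E - walk_edges c)" using less.prems(1) sub by (rule multigraph_mono)
      show "\<forall>e. count (E - walk_edges c) e \<le> 2"
        using less.prems(2) by (metis count_diff diff_le_self le_trans)
      show "vertex_cover V (E - walk_edges c) X" using less.prems(3) sub by (rule vertex_cover_mono)
      show "\<forall>v. even (degree (E - walk_edges c) v)"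
        using less.prems(1,4) c(1) by (simp add: even_degree_diff_closed_walk)
    qed
    then obtain \<C> where \<C>: "closed_walk_decomposition V (E - walk_edges c) \<C>"
      "\<forall>C\<in>#\<C>. path_len C \<noteq> 4 \<longrightarrow> simple_cycle C"
      "size (filter_mset (\<lambda>C. path_len C \<noteq> 4) \<C>) \<le> 2 * (card X)^2"
      by blast
    then show ?thesis using c closed_walk_decomposition_add[OF c(1) \<C>(1)]
      by (intro exI[of _ "add_mset c \<C>"]) simp
  qed
qed

theorem mainTheorem8:
  fixes V :: "'a set" and E :: "'a set multiset" and VC :: "'a set"
  assumes "multigraph V E"
    and "\<forall>e. count E e \<le> 2"
    and "vertex_cover V E VC"
    and "\<forall>v\<in>V. even (degree E v)"
  shows "\<exists>\<C> :: 'a list multiset.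
           (\<forall>C\<in>#\<C>. is_cycle V E C) \<and>
           size (filter_mset (\<lambda>C. path_len C \<noteq> 4) \<C>) \<le> 2 * (card VC)^2 \<and>
           (\<forall>C\<in>#\<C>. path_len C \<noteq> 4 \<longrightarrow> simple_cycle C) \<and>
           (\<Sum>C\<in>#\<C>. cycle_edges C) = E"
proof -
  have "degree E v = 0" if "v \<notin> V" for v
  proof -
    have "filter_mset (\<lambda>e. v \<in> e) E = {#}"
      using assms(1) that unfolding multigraph_def by (meson filter_mset_eq_mempty_iff subsetD)
    then show ?thesis by (simp add: degree_def)
  qed
  then have "\<forall>v. even (degree E v)" using assms(4) by (metis even_zero)
  then obtain \<C> where \<C>: "closed_walk_decomposition V E \<C>"
    "\<forall>C\<in>#\<C>. path_len C \<noteq> 4 \<longrightarrow> simple_cycle C"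
    "size (filter_mset (\<lambda>C. path_len C \<noteq> 4) \<C>) \<le> 2 * (card VC)^2"
    using decomposition_few_long_cycles[OF assms(1-3)] by blast
  then show ?thesis
    by (intro exI[of _ \<C>]) (auto simp: closed_walk_decomposition_def is_cycle_if_closed_walk
        cycle_edges_eq_walk_edges)
qed

end
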